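(* In $\mathrm{Hom}(\mathcal E(2),\mathcal E(4))$ one has $N_*(E(f)) = F$ and $\partial H_2 = N_*(E(g)) + G$.
   Context: Work over $\mathbb F_2$. For a simplicial set $X$, $N_*(X)$ is the normalized chain complex ($\mathbb F_2$ on simplices modulo degenerate ones, $\partial=\sum_id_i$); $\mathrm{Hom}(C,C')$ is the graded Hom complex with $\partial h=\partial\circ h+h\circ\partial$. Alexander–Whitney: $AW(x\times y)=\sum_{i=0}^nd_{i+1}\cdots d_nx\otimes d_0\cdots d_{i-1}y$. Eilenberg–Zilber: $EZ(x\otimes y)=\sum s_{v_p}\cdots s_{v_1}x\times s_{w_q}\cdots s_{w_1}y$, sum over disjoint $\{v_1<\dots<v_p\},\{w_1<\dots<w_q\}\subseteq\{0,\dots,p+q-1\}$ ($p,q$ the dimensions of $x,y$). Shih homotopy $SHI:N_n(X\times Y)\to N_{n+1}(X\times Y)$: zero for $n=0$, and for $n>0$ $$SHI(x\times y)=\sum s_{v_p+m}\cdots s_{v_1+m}s_{m-1}d_{n-p+1}\cdots d_nx\times s_{w_{q+1}+m}\cdots s_{w_1+m}d_{n-p-q}\cdots d_{n-p-1}y,$$ $m=n-p-q$, sum over disjoint $\{v_1<\dots<v_p\},\{w_1<\dots<w_{q+1}\}\subseteq\{0,\dots,p+q\}$ with $0\le p\le n-1$, $0\le q\le n-p-1$. $E(r)$ is the simplicial set whose $n$-simplices are tuples $(\sigma_0,\dots,\sigma_n)$ in $\Sigma_r$ ($d_i$ deletes, $s_i$ repeats the $i$-th entry); $\circ_E:E(r)\times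 E(s_1)\times\dots\times E(s_r)\to E(s_1+\dots+s_r)$ applies the usual block composition of permutations coordinatewise; $\mathcal E(r)=N_*(E(r))$ with composition $\circ_{\mathcal E}=N_*(\circ_E)\circ EZ^r$ ($EZ^r$ iterated $EZ$). $\tilde x_0=(e)\in\mathcal E(2)_0$. $f,g:\Sigma_2\to\Sigma_4$ are the homomorphisms with $f(12)=(13)(24)$, $g(12)=(12)(34)$, and $E(f),E(g)$ the induced simplicial maps (apply entrywise). $F(\sigma_0,\dots,\sigma_n)=\circ_{\mathcal E}((\sigma_0,\dots,\sigma_n)\otimes\tilde x_0\otimes\tilde x_0)$, $G(\sigma_0,\dots,\sigma_n)=\circ_{\mathcal E}(\tilde x_0\otimes AW(\sigma_0,\dots,\sigma_n)^{\otimes2})$, and $H_2(\sigma_0,\dots,\sigma_n)=N_*(\circ_E)((e,\dots,e)\otimes SHI(\sigma_0,\dots,\sigma_n)^{\otimes2})$, where $AW(\cdot)^{\otimes2}$, $SHI(\cdot)^{\otimes2}$ mean $AW$, $SHI$ applied to the diagonal simplex $(\sigma_0,\dots,\sigma_n)\times(\sigma_0,\dots,\sigma_n)$ of $E(2)\times E(2)$, and in $H_2$ the resulting simplices are paired with the constant simplex $(e,\dots,e)$ of $E(2)$ of the same dimension before applying $\circ_E$. *)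

theory Defs
  imports Main
begin

text \<open>An n-simplex of E(r) is a list of n+1 permutations; a simplex of a product
 X x Y is the list of pairs (zip). A chain over F_2 is a finite set of
 nondegenerate simplices (or of basis pairs of a tensor product); addition is
 symmetric difference.\<close>

definition modsum :: "'i set \<Rightarrow> ('i \<Rightarrow> 'a set) \<Rightarrow> 'a set" where
  "modsum I f = {a. odd (card {i\<in>I. a \<in> f i})}"

definition cadd :: "'a set \<Rightarrow> 'a set \<Rightarrow> 'a set" where
  "cadd A B = (A - B) \<union> (B - A)"

text \<open>F_2-linear extension of a map given on basis elements\<close>
definition lin :: "('a \<Rightarrow> 'b set) \<Rightarrow> 'a set \<Rightarrow> 'b set" where
  "lin \<phi> c = modsum c \<phi>"

definition dface :: "nat \<Rightarrow> 'a list \<Rightarrow> 'a list" where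
  "dface i xs = take i xs @ drop (Suc i) xs"

definition sdeg :: "nat \<Rightarrow> 'a list \<Rightarrow> 'a list" where
  "sdeg i xs = take (Suc i) xs @ drop i xs"

definition nondeg :: "'a list \<Rightarrow> bool" where
  "nondeg xs = (\<forall>i. Suc i < length xs \<longrightarrow> xs ! i \<noteq> xs ! Suc i)"

text \<open>class of a simplex in the normalized chain complex\<close>
definition nrm :: "'a list \<Rightarrow> 'a list set" where
  "nrm x = (if nondeg x then {x} else {})"

text \<open>class of x (x) y in the tensor product of normalized complexes\<close>
definition nrm2 :: "'a list \<Rightarrow> 'b list \<Rightarrow> ('a list \<times> 'b list) set" where
  "nrm2 x y = (if nondeg x \<and> nondeg y then {(x, y)} else {})"

text \<open>d_{a} ... d_{b} x for the index list [a,...,b] (rightmost applied first)\<close>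
definition faces :: "nat list \<Rightarrow> 'a list \<Rightarrow> 'a list" where
  "faces is x = foldr dface is x"

text \<open>s_{v_p + k} ... s_{v_1 + k} x for V = {v_1 < ... < v_p} (s_{v_1+k} applied first)\<close>
definition degs :: "nat \<Rightarrow> nat set \<Rightarrow> 'a list \<Rightarrow> 'a list" where
  "degs k V x = foldl (\<lambda>z v. sdeg (v + k) z) x (sorted_list_of_set V)"

definition bd :: "'a list \<Rightarrow> 'a list set" where
  "bd x = (if length x \<le> 1 then {} else modsum {0..<length x} (\<lambda>i. nrm (dface i x)))"

definition AW :: "('a \<times> 'b) list \<Rightarrow> ('a list \<times> 'b list) set" where
  "AW xs = (let n = length xs - 1 in
     modsum {0..n} (\<lambda>i. nrm2 (faces [i+1..<n+1] (map fst xs)) (faces [0..<i] (map snd xs))))"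

text \<open>Eilenberg--Zilber (shuffle map); x of dimension p receives q degeneracies\<close>
definition EZ :: "'a list \<Rightarrow> 'b list \<Rightarrow> ('a \<times> 'b) list set" where
  "EZ x y = (let p = length x - 1; q = length y - 1 in
     modsum {A. A \<subseteq> {0..<p+q} \<and> card A = q}
       (\<lambda>A. nrm (zip (degs 0 A x) (degs 0 ({0..<p+q} - A) y))))"

definition EZ3 :: "'a list \<Rightarrow> 'b list \<Rightarrow> 'c list \<Rightarrow> (('a \<times> 'b) \<times> 'c) list set" where
  "EZ3 x y z = lin (\<lambda>u. EZ u z) (EZ x y)"

definition SHI :: "('a \<times> 'b) list \<Rightarrow> ('a \<times> 'b) list set" where
  "SHI xs = (let n = length xs - 1; x = map fst xs; y = map snd xs in
     if n = 0 then {} else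
     modsum {(p, q, V). p < n \<and> q < n - p \<and> V \<subseteq> {0..p+q} \<and> card V = p}
       (\<lambda>(p, q, V). let m = n - p - q in
          nrm (zip (degs m V (sdeg (m - 1) (faces [n-p+1..<n+1] x)))
                   (degs m ({0..p+q} - V) (faces [n-p-q..<n-p] y)))))"

text \<open>A permutation of {0,...,r-1} is the list [sigma(0),...,sigma(r-1)].\<close>
type_synonym perm = "nat list"

definition Sym :: "nat \<Rightarrow> perm set" where
  "Sym r = {\<sigma>. distinct \<sigma> \<and> set \<sigma> = {0..<r}}"

definition idp :: "nat \<Rightarrow> perm" where
  "idp r = [0..<r]"

text \<open>block composition sigma(tau_1,...,tau_r) = sigma<s_1,...,s_r> o (tau_1 + ... + tau_r)\<close>
definition block_comp :: "perm \<Rightarrow> perm list \<Rightarrow> perm" where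
  "block_comp \<sigma> \<tau>s = concat (map (\<lambda>i.
      map (\<lambda>t. sum_list (map (\<lambda>l. length (\<tau>s ! l)) (filter (\<lambda>l. \<sigma> ! l < \<sigma> ! i) [0..<length \<sigma>])) + t)
          (\<tau>s ! i)) [0..<length \<sigma>])"

text \<open>circ_E : E(2) x E(2) x E(2) -> E(4), on a vertex\<close>
definition compE :: "(perm \<times> perm) \<times> perm \<Rightarrow> perm" where
  "compE u = (case u of ((a, b), c) \<Rightarrow> block_comp a [b, c])"

text \<open>f(12) = (13)(24), g(12) = (12)(34), written 0-indexed\<close>
definition hom_f :: "perm \<Rightarrow> perm" where
  "hom_f \<sigma> = (if \<sigma> = [1, 0] then [2, 3, 0, 1] else idp 4)"

definition hom_g :: "perm \<Rightarrow> perm" where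
  "hom_g \<sigma> = (if \<sigma> = [1, 0] then [1, 0, 3, 2] else idp 4)"

text \<open>nondegenerate simplices of E(r) (basis of the normalized chains E(r))\<close>
definition NE :: "nat \<Rightarrow> perm list set" where
  "NE r = {x. x \<noteq> [] \<and> nondeg x \<and> set x \<subseteq> Sym r}"

definition x0 :: "perm list" where
  "x0 = [idp 2]"

definition NEf :: "perm list \<Rightarrow> perm list set" where
  "NEf x = nrm (map hom_f x)"

definition NEg :: "perm list \<Rightarrow> perm list set" where
  "NEg x = nrm (map hom_g x)"

definition Fmap :: "perm list \<Rightarrow> perm list set" where
  "Fmap x = lin (\<lambda>u. nrm (map compE u)) (EZ3 x x0 x0)"

definition Gmap :: "perm list \<Rightarrow> perm list set" where
  "Gmap x = lin (\<lambda>(a, b). lin (\<lambda>u. nrm (map compE u)) (EZ3 x0 a b)) (AW (zip x x))"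

definition H2 :: "perm list \<Rightarrow> perm list set" where
  "H2 x = lin (\<lambda>u. nrm (map (\<lambda>(a, b). compE ((idp 2, a), b)) u)) (SHI (zip x x))"

end

theory Submission
  imports Defs "HOL-Library.Disjoint_Sets"
begin

text \<open>A nondegenerate simplex of E(2) alternates between the two elements of \<open>\<Sigma>\<^sub>2\<close>, so it
  suffices to check both identities on such a simplex x. The first one holds vertex by vertex,
  because \<open>\<circ>\<^sub>E(\<sigma>; e, e) = f(\<sigma>)\<close>.

  For the second, every vertex that occurs is a block sum of two elements of \<open>\<Sigma>\<^sub>2\<close>. Record such
  a simplex by its first vertex and the word of quotients of consecutive vertices, in the letters
  A = (1,0), B = (0,1) and C = (1,1): a face deletes the first or the last letter or multiplies
  two neighbouring letters, and the simplex is degenerate exactly when the neutral letter (0,0)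
  occurs. For an n-simplex x, N(E(g)) x is the word \<open>C\<^sup>n\<close>, G x is the sum of all words of
  length n in A and B, and \<open>H\<^sub>2\<close> x is the sum of the words \<open>C\<^sup>k B w\<close> with w a word in A and B
  containing an odd number of A's. The homotopy formula becomes an identity between sums of words:
  the faces merging two letters of w cancel in pairs, since AB and BA both merge to C and equal
  letters merge to the neutral letter, and the remaining faces telescope.\<close>

section \<open>Chains over F_2\<close>

text \<open>Chains are finite sets of basis elements with symmetric difference as addition; making
  sets a commutative monoid lets the library's finite sums serve as sums of chains.\<close>

instantiation set :: (type) comm_monoid_add
begin

definition zero_set_def: "0 = ({} :: 'a set)"

definition plus_set_def: "(A :: 'a set) + B = cadd A B"

instance
  by standard (auto simp: zero_set_def plus_set_def cadd_def)

end

lemma mem_plus_set: "x \<in> (A :: 'a set) + B \<longleftrightarrow> (x \<in> A) \<noteq> (x \<in> B)"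
  by (auto simp: plus_set_def cadd_def)

lemma cadd_eq_plus: "cadd A B = A + B"
  by (simp add: plus_set_def)

lemma zero_set_eq_empty [simp]: "(0 :: 'a set) = {}"
  by (simp add: zero_set_def)

lemma sum_empty_sets [simp]: "(\<Sum>x\<in>A. {}) = ({} :: 'a set)"
  using sum.neutral_const[of A, where 'a = "'a set"] by simp

lemma plus_set_self [simp]: "(A :: 'a set) + A = {}"
  by (auto simp: mem_plus_set)

lemma plus_set_cancel_left [simp]: "(A :: 'a set) + (A + B) = B"
  by (auto simp: mem_plus_set)

lemma plus_set_empty [simp]: "(A :: 'a set) + {} = A" "{} + (A :: 'a set) = A"
  by (auto simp: mem_plus_set)

lemma finite_plus_set [intro]: "finite A \<Longrightarrow> finite B \<Longrightarrow> finite ((A :: 'a set) + B)"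
  by (simp add: plus_set_def cadd_def)

lemma finite_sum_sets [intro]: "(\<And>i. i \<in> I \<Longrightarrow> finite (f i)) \<Longrightarrow> finite (sum f I)"
  by (induction I rule: infinite_finite_induct) auto

lemma modsum_eq_sum: "finite I \<Longrightarrow> modsum I f = sum f I"
proof (induction I rule: finite_induct)
  case empty
  then show ?case by (simp add: modsum_def)
next
  case (insert i I)
  have "card {j \<in> insert i I. a \<in> f j} =
      (if a \<in> f i then Suc (card {j \<in> I. a \<in> f j}) else card {j \<in> I. a \<in> f j})" for a
  proof -
    have "{j \<in> insert i I. a \<in> f j} =
        (if a \<in> f i then insert i {j \<in> I. a \<in> f j} else {j \<in> I. a \<in> f j})"
      by auto
    then show ?thesis using insert.hyps by auto
  qed
  then have "modsum (insert i I) f = f i + modsum I f"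
    by (auto simp: modsum_def mem_plus_set)
  then show ?case using insert.IH insert.hyps by simp
qed

lemma lin_eq_sum: "finite c \<Longrightarrow> lin f c = sum f c"
  by (simp add: lin_def modsum_eq_sum)

lemma lin_empty [simp]: "lin f {} = {}"
  by (simp add: lin_eq_sum)

lemma lin_singleton [simp]: "lin f {x} = f x"
  by (simp add: lin_eq_sum)

lemma lin_plus:
  assumes "finite A" "finite B"
  shows "lin f (A + B) = lin f A + lin f B"
proof -
  have sym_diff: "A + B = (A \<union> B) - (A \<inter> B)"
    by (auto simp: mem_plus_set)
  have "sum f A + sum f B = sum f (A \<union> B) + sum f (A \<inter> B)"
    using assms by (simp add: sum.union_inter)
  also have "sum f (A \<union> B) = sum f (A + B) + sum f (A \<inter> B)"
    unfolding sym_diff using assms by (intro sum.subset_diff) auto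
  finally show ?thesis
    using assms by (simp add: lin_eq_sum finite_plus_set add.assoc)
qed

lemma lin_sum:
  assumes "finite I" "\<And>i. i \<in> I \<Longrightarrow> finite (g i)"
  shows "lin f (sum g I) = (\<Sum>i\<in>I. lin f (g i))"
  using assms by (induction I rule: finite_induct) (simp_all add: lin_plus finite_sum_sets)

lemma lin_lin:
  assumes "finite c" "\<And>x. x \<in> c \<Longrightarrow> finite (\<phi> x)"
  shows "lin \<psi> (lin \<phi> c) = (\<Sum>x\<in>c. lin \<psi> (\<phi> x))"
  using assms by (simp add: lin_eq_sum[of c \<phi>] lin_sum)

lemma image_plus_set: "inj f \<Longrightarrow> f ` ((A :: 'a set) + B) = f ` A + f ` B"
  by (simp add: plus_set_def cadd_def image_Un image_set_diff)

lemma image_sum_sets: "inj f \<Longrightarrow> f ` (sum g I) = (\<Sum>i\<in>I. f ` g i)"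
  by (induction I rule: infinite_finite_induct) (simp_all add: image_plus_set)

lemma sum_lessThan_Suc_Suc:
  "(\<Sum>i<Suc (Suc m). g i) = g 0 + (\<Sum>i<m. g (Suc i)) + (g (Suc m) :: 'a :: comm_monoid_add)"
  by (subst sum.lessThan_Suc_shift) (simp add: add.assoc)

lemma sum_lessThan_add: "(\<Sum>j<a + b. f j) = (\<Sum>j<a. f j) + (\<Sum>j<b. f (a + j :: nat))"
  by (induction b) (simp_all add: add_ac)

lemma sum_image_Un_image:
  assumes "inj f" "inj g" "finite X" "finite Y" "f ` X \<inter> g ` Y = {}"
  shows "sum h (f ` X \<union> g ` Y) = sum (h \<circ> f) X + sum (h \<circ> g) Y"
  using assms by (simp add: sum.union_disjoint sum.reindex inj_on_subset)

lemma sum_sets_telescope: "(\<Sum>k<n. f k) = f 0 + f n + (\<Sum>k<n. f (Suc k) :: 'a set)"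
  by (induction n) (simp_all add: add_ac)

section \<open>Simplices in difference coordinates\<close>

primrec scan :: "('a \<Rightarrow> 'b \<Rightarrow> 'a) \<Rightarrow> 'a \<Rightarrow> 'b list \<Rightarrow> 'a list" where
  "scan f a [] = [a]"
| "scan f a (d # ds) = a # scan f (f a d) ds"

lemma length_scan [simp]: "length (scan f a ds) = Suc (length ds)"
  by (induction ds arbitrary: a) auto

lemma scan_not_Nil [simp]: "scan f a ds \<noteq> []" "[] \<noteq> scan f a ds"
  by (cases ds; simp)+

lemma take_scan: "i \<le> length ds \<Longrightarrow> take (Suc i) (scan f a ds) = scan f a (take i ds)"
  by (induction ds arbitrary: a i) (auto simp: take_Cons split: nat.split)

lemma dface_last_scan: "ds \<noteq> [] \<Longrightarrow> dface (length ds) (scan f a ds) = scan f a (butlast ds)"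
  by (induction ds arbitrary: a) (auto simp: dface_def neq_Nil_conv)

lemma zip_scan:
  assumes "length ds = length es" "\<And>a b d e. h (a, b) (d, e) = (f a d, g b e)"
  shows "zip (scan f a ds) (scan g b es) = scan h (a, b) (zip ds es)"
  using assms(1)
proof (induction ds arbitrary: es a b)
  case Nil
  then show ?case by simp
next
  case (Cons d ds)
  then obtain e es' where "es = e # es'" by (cases es) auto
  then show ?case using Cons assms(2) by simp
qed

lemma nondeg_Cons_Cons [simp]: "nondeg (a # b # xs) \<longleftrightarrow> a \<noteq> b \<and> nondeg (b # xs)"
  unfolding nondeg_def
proof (intro iffI conjI allI impI)
  assume h: "\<forall>i. Suc i < length (a # b # xs) \<longrightarrow> (a # b # xs) ! i \<noteq> (a # b # xs) ! Suc i"
  show "a \<noteq> b" using h[rule_format, of 0] by simp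
  fix i assume "Suc i < length (b # xs)"
  then show "(b # xs) ! i \<noteq> (b # xs) ! Suc i" using h[rule_format, of "Suc i"] by simp
next
  fix i
  assume h: "a \<noteq> b \<and> (\<forall>i. Suc i < length (b # xs) \<longrightarrow> (b # xs) ! i \<noteq> (b # xs) ! Suc i)"
    and i: "Suc i < length (a # b # xs)"
  then show "(a # b # xs) ! i \<noteq> (a # b # xs) ! Suc i"
    by (cases i) auto
qed

lemma nondeg_singleton [simp]: "nondeg [a]"
  by (simp add: nondeg_def)

lemma nondeg_Cons_scan: "nondeg (a # scan f b ds) \<longleftrightarrow> a \<noteq> b \<and> nondeg (scan f b ds)"
  by (cases ds) simp_all

context semigroup
begin

lemma dface_Suc_scan:
  "Suc i < length ds \<Longrightarrow>
   dface (Suc i) (scan (\<^bold>*) a ds) = scan (\<^bold>*) a (take i ds @ (ds ! i \<^bold>* ds ! Suc i) # drop (Suc (Suc i)) ds)"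
proof (induction ds arbitrary: a i)
  case Nil
  then show ?case by simp
next
  case (Cons d ds)
  show ?case
  proof (cases i)
    case 0
    with Cons.prems obtain d' ds' where "ds = d' # ds'" by (cases ds) auto
    with 0 show ?thesis by (simp add: dface_def assoc)
  next
    case (Suc j)
    with Cons show ?thesis by (simp add: dface_def)
  qed
qed

end

context monoid
begin

lemma sdeg_scan:
  "i \<le> length ds \<Longrightarrow> sdeg i (scan (\<^bold>*) a ds) = scan (\<^bold>*) a (take i ds @ \<^bold>1 # drop i ds)"
proof (induction ds arbitrary: a i)
  case Nil
  then show ?case by (simp add: sdeg_def)
next
  case (Cons d ds)
  then show ?case by (cases i) (auto simp: sdeg_def)
qed

lemma scan_replicate_neutral: "scan (\<^bold>*) a (replicate q \<^bold>1) = replicate (Suc q) a"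
  by (induction q) auto

end

lemma insert_max_indicator_list:
  fixes z d :: 'a
  assumes "c \<le> M" "\<forall>a\<in>A. a < c"
  defines "l \<equiv> map (\<lambda>i. if i \<in> A then z else d) [0..<M]"
  shows "take c l @ z # drop c l = map (\<lambda>i. if i \<in> insert c A then z else d) [0..<Suc M]"
proof (rule nth_equalityI)
  fix j assume "j < length (take c l @ z # drop c l)"
  then have j: "j < Suc M"
    using assms by simp
  consider "j < c" | "j = c" | "c < j"
    by linarith
  then show "(take c l @ z # drop c l) ! j = map (\<lambda>i. if i \<in> insert c A then z else d) [0..<Suc M] ! j"
    by cases (use assms j in \<open>auto simp: nth_append nth_Cons'\<close>)
qed (use assms in simp)

context monoid
begin

lemma degs_scan:
  assumes "finite V" "V \<subseteq> {0..<r + card V}" "length pre = k"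
  shows "degs k V (scan (\<^bold>*) a (pre @ replicate r d))
       = scan (\<^bold>*) a (pre @ map (\<lambda>i. if i \<in> V then \<^bold>1 else d) [0..<r + card V])"
  using assms(1,2) unfolding degs_def
proof (induction V rule: finite_linorder_max_induct)
  case empty
  then show ?case by (simp add: map_replicate_trivial)
next
  case (insert c A)
  let ?M = "r + card A"
  have card: "card (insert c A) = Suc (card A)"
    using insert.hyps by auto
  have "c \<le> ?M" "A \<subseteq> {0..<?M}"
    using insert.prems insert.hyps card by fastforce+
  moreover have "sorted_list_of_set (insert c A) = sorted_list_of_set A @ [c]"
  proof -
    have "c \<notin> A"
      using insert.hyps by auto
    then have "sorted_list_of_set (insert c A) = insort c (sorted_list_of_set A)"
      using insert.hyps by (simp add: sorted_list_of_set_insert)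
    also have "\<dots> = sorted_list_of_set A @ [c]"
      using insert.hyps by (intro sorted_insort_is_snoc) auto
    finally show ?thesis .
  qed
  ultimately have "foldl (\<lambda>z v. sdeg (v + k) z) (scan (\<^bold>*) a (pre @ replicate r d))
        (sorted_list_of_set (insert c A))
      = sdeg (c + k) (scan (\<^bold>*) a (pre @ map (\<lambda>i. if i \<in> A then \<^bold>1 else d) [0..<?M]))"
    using insert.IH by simp
  also have "\<dots> = scan (\<^bold>*) a (pre @ take c (map (\<lambda>i. if i \<in> A then \<^bold>1 else d) [0..<?M]) @
      \<^bold>1 # drop c (map (\<lambda>i. if i \<in> A then \<^bold>1 else d) [0..<?M]))"
    using \<open>c \<le> ?M\<close> assms(3) by (simp add: sdeg_scan add.commute[of c])
  also have "\<dots> = scan (\<^bold>*) a (pre @ map (\<lambda>i. if i \<in> insert c A then \<^bold>1 else d) [0..<Suc ?M])"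
    using \<open>c \<le> ?M\<close> insert.hyps(2) by (simp only: insert_max_indicator_list)
  finally show ?case
    by (simp only: card add_Suc_right)
qed

end

context group
begin

lemma nondeg_scan: "nondeg (scan (\<^bold>*) a ds) \<longleftrightarrow> \<^bold>1 \<notin> set ds"
proof (induction ds arbitrary: a)
  case Nil
  then show ?case by simp
next
  case (Cons d ds)
  have "a \<noteq> a \<^bold>* d \<longleftrightarrow> d \<noteq> \<^bold>1"
    using left_cancel[of a d "\<^bold>1"] by auto
  then show ?case
    using Cons.IH by (auto simp: nondeg_Cons_scan)
qed

lemma scan_inject: "scan (\<^bold>*) a ds = scan (\<^bold>*) b es \<Longrightarrow> a = b \<and> ds = es"
proof (induction ds arbitrary: a b es)
  case Nil
  then show ?case by (cases es) auto
next
  case (Cons d ds)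
  then obtain e es' where es: "es = e # es'" by (cases es) auto
  with Cons.prems have "a = b" "scan (\<^bold>*) (a \<^bold>* d) ds = scan (\<^bold>*) (b \<^bold>* e) es'"
    by auto
  with Cons.IH have "a \<^bold>* d = b \<^bold>* e" "ds = es'"
    by blast+
  with \<open>a = b\<close> es show ?case by (simp add: left_cancel)
qed

end

text \<open>A named constant rather than \<open>(\<noteq>)\<close>, which the simplifier would rewrite inside \<open>scan\<close>.\<close>

definition bxor :: "bool \<Rightarrow> bool \<Rightarrow> bool" where
  "bxor a b = (a \<noteq> b)"

lemma bxor_True [simp]: "bxor a True = (\<not> a)"
  and bxor_False [simp]: "bxor a False = a"
  by (auto simp: bxor_def)

interpretation bool_xor: group bxor False id
  by standard (auto simp: bxor_def)

type_synonym letter = "bool \<times> bool"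

definition pxor :: "letter \<Rightarrow> letter \<Rightarrow> letter" where
  "pxor u v = (bxor (fst u) (fst v), bxor (snd u) (snd v))"

interpretation pair_xor: group pxor "(False, False)" id
  by standard (auto simp: pxor_def bxor_def)

lemma dface_map: "dface i (map g xs) = map g (dface i xs)"
  by (simp add: dface_def take_map drop_map)

lemma sdeg_map: "sdeg i (map g xs) = map g (sdeg i xs)"
  by (simp add: sdeg_def take_map drop_map)

lemma degs_map: "degs k V (map g xs) = map g (degs k V xs)"
proof -
  have "foldl (\<lambda>z v. sdeg (v + k) z) (map g xs) vs = map g (foldl (\<lambda>z v. sdeg (v + k) z) xs vs)"
    for vs by (induction vs arbitrary: xs) (auto simp: sdeg_map)
  then show ?thesis by (simp add: degs_def)
qed

lemma nondeg_map: "inj g \<Longrightarrow> nondeg (map g xs) \<longleftrightarrow> nondeg xs"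
  by (auto simp: nondeg_def inj_eq)

lemma finite_nrm [simp]: "finite (nrm x)"
  by (simp add: nrm_def)

lemma lin_nrm_map: "lin (\<lambda>u. nrm (map g u)) (nrm z) = nrm (map g z)"
  by (auto simp: nrm_def nondeg_def)

lemma faces_upt: "a \<le> b \<Longrightarrow> b \<le> length x \<Longrightarrow> faces [a..<b] x = take a x @ drop b x"
proof (induction "b - a" arbitrary: a)
  case 0
  then show ?case by (simp add: faces_def)
next
  case (Suc d)
  then have "faces [a..<b] x = dface a (take (Suc a) x @ drop b x)"
    by (simp add: faces_def upt_conv_Cons)
  also have "\<dots> = take a x @ drop b x"
    using Suc.prems Suc.hyps(2) by (simp add: dface_def take_Suc_conv_app_nth min_def)
  finally show ?case .
qed

lemma finite_bd: "finite (bd x)"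
  by (auto simp: bd_def modsum_eq_sum)

definition perm_of_bool :: "bool \<Rightarrow> perm" where
  "perm_of_bool b = (if b then [1, 0] else [0, 1])"

lemma inj_perm_of_bool: "inj perm_of_bool"
  by (auto simp: inj_def perm_of_bool_def)

lemma Sym_2_cases:
  assumes "\<sigma> \<in> Sym 2"
  obtains b where "\<sigma> = perm_of_bool b"
proof -
  have "{0..<2::nat} = {0, 1}"
    by auto
  with assms have set: "set \<sigma> = {0, 1}" and "distinct \<sigma>"
    by (simp_all add: Sym_def)
  then have "length \<sigma> = 2"
    using distinct_card[of \<sigma>] by simp
  then obtain i j where \<sigma>: "\<sigma> = [i, j]"
    by (auto simp: length_Suc_conv numeral_2_eq_2)
  with set \<open>distinct \<sigma>\<close> have "\<sigma> = [0, 1] \<or> \<sigma> = [1, 0]"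
    by (auto simp: doubleton_eq_iff)
  then show ?thesis
    using that unfolding perm_of_bool_def by metis
qed

definition alt_simplex :: "bool \<Rightarrow> nat \<Rightarrow> perm list" where
  "alt_simplex s n = map perm_of_bool (scan bxor s (replicate n True))"

lemma nondeg_bool_list_eq_scan: "nondeg (b # bs) \<Longrightarrow> b # bs = scan bxor b (replicate (length bs) True)"
proof (induction bs arbitrary: b)
  case Nil
  then show ?case by simp
next
  case (Cons c bs)
  then show ?case by auto
qed

lemma NE_2_eq_alt_simplex:
  assumes "x \<in> NE 2"
  obtains s n where "x = alt_simplex s n"
proof -
  have x: "x \<noteq> []" "nondeg x" "set x \<subseteq> Sym 2"
    using assms by (auto simp: NE_def)
  have "\<forall>\<sigma>\<in>set x. \<exists>b. \<sigma> = perm_of_bool b"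
    using x(3) Sym_2_cases by (metis subsetD)
  then obtain bs where bs: "x = map perm_of_bool bs"
    by (metis ex_map_conv)
  with x(1) obtain b bs' where "bs = b # bs'"
    by (cases bs) auto
  moreover have "nondeg bs"
    using x(2) bs nondeg_map[OF inj_perm_of_bool] by simp
  ultimately have "bs = scan bxor b (replicate (length bs') True)"
    using nondeg_bool_list_eq_scan by blast
  then show ?thesis
    using that bs unfolding alt_simplex_def by blast
qed

lemma length_alt_simplex [simp]: "length (alt_simplex s n) = Suc n"
  by (simp add: alt_simplex_def)

lemma nondeg_alt_simplex: "nondeg (alt_simplex s n)"
  by (simp add: alt_simplex_def nondeg_map[OF inj_perm_of_bool] bool_xor.nondeg_scan)

lemma take_alt_simplex: "i \<le> n \<Longrightarrow> take (Suc i) (alt_simplex s n) = alt_simplex s i"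
  by (simp add: alt_simplex_def take_map take_scan)

lemma drop_scan_alternating:
  "i \<le> n \<Longrightarrow> drop i (scan bxor s (replicate n True)) = scan bxor (bxor s (odd i)) (replicate (n - i) True)"
proof (induction i arbitrary: s n)
  case 0
  then show ?case by simp
next
  case (Suc i)
  then obtain n' where "n = Suc n'"
    by (cases n) auto
  with Suc.IH[of n' "\<not> s"] Suc.prems show ?case
    by (auto simp: bxor_def)
qed

lemma drop_alt_simplex: "i \<le> n \<Longrightarrow> drop i (alt_simplex s n) = alt_simplex (bxor s (odd i)) (n - i)"
  by (simp add: alt_simplex_def drop_map drop_scan_alternating)

lemma bd_alt_simplex: "bd (alt_simplex s (Suc n)) = {alt_simplex (\<not> s) n} + {alt_simplex s n}"
proof -
  let ?x = "alt_simplex s (Suc n)"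
  let ?f = "\<lambda>i. nrm (dface i ?x)"
  have "bd ?x = (\<Sum>i<Suc (Suc n). ?f i)"
    by (simp add: bd_def modsum_eq_sum atLeast0LessThan)
  also have "\<dots> = ?f 0 + (\<Sum>i<n. ?f (Suc i)) + ?f (Suc n)"
    by (rule sum_lessThan_Suc_Suc)
  also have "?f 0 = {alt_simplex (\<not> s) n}"
    by (simp add: dface_def alt_simplex_def nrm_def nondeg_map[OF inj_perm_of_bool] bool_xor.nondeg_scan)
  also have "(\<Sum>i<n. ?f (Suc i)) = {}"
  proof (intro sum.neutral[where 'a = "perm list set", unfolded zero_set_eq_empty] ballI)
    fix i assume "i \<in> {..<n}"
    then have "\<not> nondeg (dface (Suc i) (scan bxor s (replicate (Suc n) True)))"
      by (simp add: bool_xor.dface_Suc_scan bool_xor.nondeg_scan del: replicate_Suc)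
    then show "?f (Suc i) = {}"
      unfolding alt_simplex_def dface_map nrm_def nondeg_map[OF inj_perm_of_bool] by (simp only: if_False)
  qed
  also have "?f (Suc n) = {alt_simplex s n}"
  proof -
    have "dface (Suc n) (scan bxor s (replicate (Suc n) True)) = scan bxor s (replicate n True)"
      using dface_last_scan[of "replicate (Suc n) True" bxor s]
      by (simp add: butlast_conv_take del: replicate_Suc)
    then show ?thesis
      unfolding alt_simplex_def dface_map nrm_def nondeg_map[OF inj_perm_of_bool]
      by (simp add: bool_xor.nondeg_scan del: scan.simps)
  qed
  finally show ?thesis by simp
qed

section \<open>Simplices of E(4) in word coordinates\<close>

definition block_perm :: "letter \<Rightarrow> perm" where
  "block_perm u = compE ((idp 2, perm_of_bool (fst u)), perm_of_bool (snd u))"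

lemma idp_2: "idp 2 = [0, Suc 0]"
  by (simp add: idp_def eval_nat_numeral)

lemma idp_4: "idp 4 = [0, 1, 2, 3]"
  by (simp add: idp_def eval_nat_numeral)

lemma block_comp_id_2: "block_comp [0, Suc 0] [a, b] = a @ map (\<lambda>t. length a + t) b"
  by (simp add: block_comp_def numeral_2_eq_2) (rule map_idI, simp)

lemma block_comp_swap_2: "block_comp [Suc 0, 0] [a, b] = map (\<lambda>t. length b + t) a @ b"
  by (simp add: block_comp_def numeral_2_eq_2) (rule map_idI, simp)

lemma block_perm_simps:
  "block_perm (False, False) = [0, 1, 2, 3]" "block_perm (False, True) = [0, 1, 3, 2]"
  "block_perm (True, False) = [1, 0, 2, 3]" "block_perm (True, True) = [1, 0, 3, 2]"
  by (simp_all add: block_perm_def compE_def block_comp_id_2 perm_of_bool_def idp_2)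

lemma inj_block_perm: "inj block_perm"
proof (rule injI)
  fix u v :: letter
  have nth: "block_perm (a, b) ! 0 = (if a then 1 else 0)" "block_perm (a, b) ! 2 = (if b then 3 else 2)"
    for a b
    by (cases a; cases b; simp add: block_perm_simps)+
  assume "block_perm u = block_perm v"
  then have "block_perm (fst u, snd u) ! 0 = block_perm (fst v, snd v) ! 0"
    "block_perm (fst u, snd u) ! 2 = block_perm (fst v, snd v) ! 2"
    by simp_all
  then show "u = v"
    unfolding nth by (simp add: prod_eq_iff split: if_splits)
qed

abbreviation LA :: letter where "LA \<equiv> (True, False)"
abbreviation LB :: letter where "LB \<equiv> (False, True)"
abbreviation LC :: letter where "LC \<equiv> (True, True)"
abbreviation LZ :: letter where "LZ \<equiv> (False, False)"

definition word_simplex :: "letter \<times> letter list \<Rightarrow> perm list" where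
  "word_simplex z = map block_perm (scan pxor (fst z) (snd z))"

lemma inj_word_simplex: "inj word_simplex"
proof (rule injI)
  fix z z' assume "word_simplex z = word_simplex z'"
  then have "scan pxor (fst z) (snd z) = scan pxor (fst z') (snd z')"
    unfolding word_simplex_def using inj_block_perm by (simp add: inj_map_eq_map)
  from pair_xor.scan_inject[OF this] show "z = z'"
    by (simp add: prod_eq_iff)
qed

definition word_nrm :: "letter \<times> letter list \<Rightarrow> (letter \<times> letter list) set" where
  "word_nrm z = (if LZ \<in> set (snd z) then {} else {z})"

definition merge_at :: "nat \<Rightarrow> letter list \<Rightarrow> letter list" where
  "merge_at i w = take i w @ pxor (w ! i) (w ! Suc i) # drop (Suc (Suc i)) w"

definition word_face :: "nat \<Rightarrow> letter \<times> letter list \<Rightarrow> letter \<times> letter list" where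
  "word_face j z = (case j of
      0 \<Rightarrow> (pxor (fst z) (hd (snd z)), tl (snd z))
    | Suc i \<Rightarrow> if Suc i < length (snd z) then (fst z, merge_at i (snd z)) else (fst z, butlast (snd z)))"

definition word_bd :: "letter \<times> letter list \<Rightarrow> (letter \<times> letter list) set" where
  "word_bd z = (if snd z = [] then {} else (\<Sum>j<Suc (length (snd z)). word_nrm (word_face j z)))"

lemma nrm_word_simplex: "nrm (word_simplex z) = word_simplex ` word_nrm z"
  by (simp add: word_simplex_def nrm_def word_nrm_def nondeg_map[OF inj_block_perm] pair_xor.nondeg_scan)

lemma dface_word_simplex:
  assumes "i \<le> length (snd z)" "snd z \<noteq> []"
  shows "dface i (word_simplex z) = word_simplex (word_face i z)"
proof -
  have "dface i (scan pxor (fst z) (snd z)) = scan pxor (fst (word_face i z)) (snd (word_face i z))"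
  proof (cases i)
    case 0
    with assms show ?thesis
      by (cases "snd z") (simp_all add: word_face_def dface_def)
  next
    case (Suc j)
    show ?thesis
    proof (cases "Suc j < length (snd z)")
      case True
      with Suc show ?thesis
        by (simp add: word_face_def pair_xor.dface_Suc_scan merge_at_def)
    next
      case False
      with Suc have "word_face i z = (fst z, butlast (snd z))"
        by (simp add: word_face_def)
      moreover from False assms Suc have "i = length (snd z)"
        by simp
      ultimately show ?thesis
        using assms
        by (simp add: dface_last_scan)
    qed
  qed
  then show ?thesis
    by (simp add: word_simplex_def dface_map)
qed

lemma bd_word_simplex: "bd (word_simplex z) = word_simplex ` word_bd z"
proof (cases "snd z = []")
  case True
  then show ?thesis by (simp add: bd_def word_bd_def word_simplex_def)
next
  case False
  have "bd (word_simplex z) = (\<Sum>i<Suc (length (snd z)). nrm (dface i (word_simplex z)))"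
    using False by (simp add: bd_def word_simplex_def modsum_eq_sum atLeast0LessThan)
  also have "\<dots> = (\<Sum>i<Suc (length (snd z)). word_simplex ` word_nrm (word_face i z))"
    using False by (intro sum.cong) (simp_all add: dface_word_simplex nrm_word_simplex)
  also have "\<dots> = word_simplex ` word_bd z"
    using False by (simp add: word_bd_def image_sum_sets[OF inj_word_simplex] del: sum.lessThan_Suc)
  finally show ?thesis .
qed

lemma lin_bd_image_word_simplex:
  assumes "finite Z"
  shows "lin bd (word_simplex ` Z) = word_simplex ` lin word_bd Z"
proof -
  have "lin bd (word_simplex ` Z) = (\<Sum>z\<in>Z. bd (word_simplex z))"
    using assms inj_on_subset[OF inj_word_simplex]
    by (simp add: lin_eq_sum sum.reindex)
  also have "\<dots> = word_simplex ` lin word_bd Z"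
    using assms by (simp add: bd_word_simplex lin_eq_sum image_sum_sets[OF inj_word_simplex])
  finally show ?thesis .
qed

definition ab_words :: "nat \<Rightarrow> letter list set" where
  "ab_words n = {w. set w \<subseteq> {LA, LB} \<and> length w = n}"

definition count_A :: "letter list \<Rightarrow> nat" where
  "count_A w = length (filter (\<lambda>l. l = LA) w)"

definition odd_words :: "nat \<Rightarrow> letter list set" where
  "odd_words n = {w \<in> ab_words n. odd (count_A w)}"

definition even_words :: "nat \<Rightarrow> letter list set" where
  "even_words n = {w \<in> ab_words n. even (count_A w)}"

lemma finite_ab_words [simp]: "finite (ab_words n)"
  unfolding ab_words_def by (rule finite_lists_length_eq) simp

lemma finite_odd_words [simp]: "finite (odd_words n)"
  and finite_even_words [simp]: "finite (even_words n)"
  by (auto simp: odd_words_def even_words_def)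

lemma count_A_simps [simp]:
  "count_A [] = 0" "count_A (LA # w) = Suc (count_A w)" "count_A (LB # w) = count_A w"
  "count_A (u @ v) = count_A u + count_A v"
  by (auto simp: count_A_def)

lemma LZ_notin_ab_word: "w \<in> ab_words n \<Longrightarrow> LZ \<notin> set w"
  by (auto simp: ab_words_def)

lemma ab_words_0 [simp]: "ab_words 0 = {[]}"
  by (auto simp: ab_words_def)

lemma odd_words_0 [simp]: "odd_words 0 = {}"
  by (auto simp: odd_words_def ab_words_def)

lemma even_words_0 [simp]: "even_words 0 = {[]}"
  by (auto simp: even_words_def ab_words_def)

lemma ab_words_eq_odd_Un_even: "ab_words n = odd_words n \<union> even_words n"
  by (auto simp: odd_words_def even_words_def)

lemma ab_words_Suc: "ab_words (Suc n) = Cons LB ` ab_words n \<union> Cons LA ` ab_words n"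
proof (intro set_eqI iffI)
  fix w assume "w \<in> ab_words (Suc n)"
  then obtain l u where "w = l # u" "l \<in> {LA, LB}" "u \<in> ab_words n"
    by (cases w) (auto simp: ab_words_def)
  then show "w \<in> Cons LB ` ab_words n \<union> Cons LA ` ab_words n"
    by auto
qed (auto simp: ab_words_def)

lemma ab_words_Suc_snoc:
  "ab_words (Suc n) = (\<lambda>u. u @ [LB]) ` ab_words n \<union> (\<lambda>u. u @ [LA]) ` ab_words n"
proof (intro set_eqI iffI)
  fix w assume w: "w \<in> ab_words (Suc n)"
  then have "w \<noteq> []"
    by (auto simp: ab_words_def)
  then obtain u l where "w = u @ [l]"
    by (metis rev_exhaust)
  with w show "w \<in> (\<lambda>u. u @ [LB]) ` ab_words n \<union> (\<lambda>u. u @ [LA]) ` ab_words n"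
    by (auto simp: ab_words_def)
qed (auto simp: ab_words_def)

lemma sum_even_words_Suc:
  "sum g (even_words (Suc n)) = (\<Sum>v\<in>even_words n. g (LB # v)) + (\<Sum>v\<in>odd_words n. g (LA # v))"
proof -
  have "even_words (Suc n) = Cons LB ` even_words n \<union> Cons LA ` odd_words n"
    unfolding odd_words_def even_words_def ab_words_Suc by auto
  then show ?thesis
    by (simp only:) (subst sum_image_Un_image; auto simp: comp_def)
qed

lemma sum_odd_words_Suc:
  "sum g (odd_words (Suc n)) = (\<Sum>v\<in>odd_words n. g (LB # v)) + (\<Sum>v\<in>even_words n. g (LA # v))"
proof -
  have "odd_words (Suc n) = Cons LB ` odd_words n \<union> Cons LA ` even_words n"
    unfolding odd_words_def even_words_def ab_words_Suc by auto
  then show ?thesis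
    by (simp only:) (subst sum_image_Un_image; auto simp: comp_def)
qed

lemma sum_odd_words_Suc_snoc:
  "sum g (odd_words (Suc n)) = (\<Sum>v\<in>odd_words n. g (v @ [LB])) + (\<Sum>v\<in>even_words n. g (v @ [LA]))"
proof -
  have "odd_words (Suc n) = (\<lambda>u. u @ [LB]) ` odd_words n \<union> (\<lambda>u. u @ [LA]) ` even_words n"
    unfolding odd_words_def even_words_def ab_words_Suc_snoc by auto
  then show ?thesis
    by (simp only:) (subst sum_image_Un_image; auto simp: comp_def inj_def)
qed

definition shuffle_word :: "nat \<Rightarrow> nat set \<Rightarrow> letter list" where
  "shuffle_word n A = map (\<lambda>i. if i \<in> A then LB else LA) [0..<n]"

lemma shuffle_word_in_ab_words: "shuffle_word n A \<in> ab_words n"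
  by (auto simp: shuffle_word_def ab_words_def)

lemma count_A_shuffle_word:
  assumes "A \<subseteq> {0..<n}"
  shows "count_A (shuffle_word n A) = n - card A"
proof -
  have "count_A (shuffle_word n A) = card ({0..<n} - A)"
    by (simp add: count_A_def shuffle_word_def filter_map comp_def distinct_length_filter
        Diff_eq Int_commute Compl_eq)
  also have "\<dots> = n - card A"
    using assms by (simp add: card_Diff_subset finite_subset)
  finally show ?thesis .
qed

lemma bij_shuffle_word: "bij_betw (shuffle_word n) (Pow {0..<n}) (ab_words n)"
proof (rule bij_betw_byWitness[where f' = "\<lambda>w. {i. i < n \<and> w ! i = LB}"])
  show "\<forall>A\<in>Pow {0..<n}. {i. i < n \<and> shuffle_word n A ! i = LB} = A"
    by (auto simp: shuffle_word_def split: if_splits)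
  show "\<forall>w\<in>ab_words n. shuffle_word n {i. i < n \<and> w ! i = LB} = w"
  proof
    fix w assume w: "w \<in> ab_words n"
    show "shuffle_word n {i. i < n \<and> w ! i = LB} = w"
    proof (rule nth_equalityI)
      fix i assume "i < length (shuffle_word n {i. i < n \<and> w ! i = LB})"
      with w have "i < n" "w ! i \<in> {LA, LB}"
        by (auto simp: shuffle_word_def ab_words_def dest!: nth_mem)
      then show "shuffle_word n {i. i < n \<and> w ! i = LB} ! i = w ! i"
        by (auto simp: shuffle_word_def)
    qed (use w in \<open>simp add: shuffle_word_def ab_words_def\<close>)
  qed
qed (auto simp: shuffle_word_in_ab_words)

lemma sum_ab_words_shuffle_word: "sum g (ab_words n) = (\<Sum>A\<in>Pow {0..<n}. g (shuffle_word n A))"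
  using sum.reindex_bij_betw[OF bij_shuffle_word, of g n] by simp

lemma degs_x0: "degs 0 {0..<n} x0 = replicate (Suc n) (idp 2)"
proof -
  have "degs 0 {0..<n} (scan bxor False ([] @ replicate 0 True))
      = scan bxor False ([] @ map (\<lambda>i. if i \<in> {0..<n} then False else True) [0..<0 + card {0..<n}])"
    by (rule bool_xor.degs_scan) simp_all
  moreover have "map (\<lambda>i. if i \<in> {0..<n} then False else True) [0..<n] = replicate n False"
    by (rule nth_equalityI) auto
  ultimately have "degs 0 {0..<n} [False] = replicate (Suc n) False"
    by (simp add: bool_xor.scan_replicate_neutral del: replicate_Suc)
  then have "degs 0 {0..<n} (map perm_of_bool [False]) = replicate (Suc n) (perm_of_bool False)"
    by (simp only: degs_map map_replicate)
  then show ?thesis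
    by (simp add: x0_def perm_of_bool_def idp_2)
qed

lemma length_x0 [simp]: "length x0 = Suc 0"
  by (simp add: x0_def)

lemma degs_empty [simp]: "degs k {} u = u"
  by (simp add: degs_def)

lemma subsets_card_0: "{A. A \<subseteq> {0..<(n::nat)} \<and> card A = 0} = {{}}"
proof -
  have "A = {}" if "A \<subseteq> {0..<n}" "card A = 0" for A
    using that finite_subset[of A "{0..<n}"] by simp
  then show ?thesis
    by (intro set_eqI iffI) simp_all
qed

lemma subsets_card_full: "{A. A \<subseteq> {0..<(n::nat)} \<and> card A = n} = {{0..<n}}"
proof -
  have "A = {0..<n}" if "A \<subseteq> {0..<n}" "card A = n" for A
    using that card_subset_eq[of "{0..<n}" A] by simp
  then show ?thesis
    by (intro set_eqI iffI) simp_all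
qed

lemma EZ_x0_right:
  assumes "nondeg u" "length u = Suc n"
  shows "EZ u x0 = {zip u (replicate (Suc n) (idp 2))}"
proof -
  have "EZ u x0 = nrm (zip u (replicate (Suc n) (idp 2)))"
    using assms by (simp add: EZ_def subsets_card_0 modsum_eq_sum degs_x0)
  also have "\<dots> = {zip u (replicate (Suc n) (idp 2))}"
    using assms(1) by (auto simp: nrm_def nondeg_def)
  finally show ?thesis .
qed

lemma EZ_x0_left:
  assumes "nondeg u" "length u = Suc n"
  shows "EZ x0 u = {map (Pair (idp 2)) u}"
proof -
  have "EZ x0 u = nrm (map (Pair (idp 2)) u)"
    using assms
    by (simp add: EZ_def subsets_card_full modsum_eq_sum degs_x0 zip_replicate1 del: replicate_Suc)
  also have "\<dots> = {map (Pair (idp 2)) u}"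
    using assms(1) by (simp add: nrm_def nondeg_map inj_def)
  finally show ?thesis .
qed

lemma compE_id_id: "compE ((perm_of_bool b, idp 2), idp 2) = hom_f (perm_of_bool b)"
  by (cases b) (simp_all add: compE_def perm_of_bool_def idp_2 idp_4 hom_f_def block_comp_id_2 block_comp_swap_2)

lemma NEf_alt_simplex: "NEf (alt_simplex s n) = Fmap (alt_simplex s n)"
proof -
  let ?x = "alt_simplex s n"
  let ?r = "replicate (Suc n) (idp 2)"
  have zip_x: "zip ?x ?r = map (\<lambda>\<sigma>. (\<sigma>, idp 2)) ?x"
    by (simp add: zip_replicate2 del: replicate_Suc)
  have "nondeg (zip ?x ?r)"
    using nondeg_alt_simplex by (auto simp: nondeg_def)
  then have "EZ3 ?x x0 x0 = {zip (zip ?x ?r) ?r}"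
    using EZ_x0_right[OF nondeg_alt_simplex] EZ_x0_right[of "zip ?x ?r" n] by (simp add: EZ3_def)
  then have "Fmap ?x = nrm (map (\<lambda>\<sigma>. compE ((\<sigma>, idp 2), idp 2)) ?x)"
    by (simp add: Fmap_def zip_x zip_replicate2 comp_def del: replicate_Suc)
  also have "map (\<lambda>\<sigma>. compE ((\<sigma>, idp 2), idp 2)) ?x = map hom_f ?x"
    by (simp add: alt_simplex_def compE_id_id)
  finally show ?thesis
    by (simp add: NEf_def)
qed

lemma NEg_alt_simplex: "NEg (alt_simplex s n) = word_simplex ` {((s, s), replicate n LC)}"
proof -
  have "hom_g (perm_of_bool b) = block_perm (b, b)" for b
    by (cases b) (simp_all add: hom_g_def block_perm_simps perm_of_bool_def idp_4)
  then have "map hom_g (alt_simplex s n) = map block_perm (zip (scan bxor s (replicate n True)) (scan bxor s (replicate n True)))"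
    by (simp add: alt_simplex_def zip_same_conv_map)
  also have "\<dots> = word_simplex ((s, s), replicate n LC)"
    by (simp add: word_simplex_def zip_scan[where h = pxor] pxor_def zip_replicate)
  finally show ?thesis
    by (simp add: NEg_def nrm_word_simplex word_nrm_def)
qed

lemma compE_Pair_id: "map compE (zip (map (Pair (idp 2)) (map perm_of_bool bs)) (map perm_of_bool cs))
    = map block_perm (zip bs cs)"
proof (induction bs arbitrary: cs)
  case Nil
  then show ?case by simp
next
  case (Cons b bs)
  then show ?case by (cases cs) (simp_all add: block_perm_def)
qed

lemma degs_alt_simplex:
  assumes "A \<subseteq> {0..<i + card A}"
  shows "degs 0 A (alt_simplex s i) = map perm_of_bool (scan bxor s (map (\<lambda>k. k \<notin> A) [0..<i + card A]))"
proof -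
  have "degs 0 A (scan bxor s ([] @ replicate i True))
      = scan bxor s ([] @ map (\<lambda>k. if k \<in> A then False else True) [0..<i + card A])"
    using assms by (intro bool_xor.degs_scan) (auto intro: finite_subset)
  then show ?thesis
    by (simp add: alt_simplex_def degs_map)
qed

lemma EZ_summand_x0_alt_simplex:
  assumes "A \<subseteq> {0..<i + j}" "card A = j"
  shows "map compE (zip (map (Pair (idp 2)) (degs 0 A (alt_simplex s i))) (degs 0 ({0..<i + j} - A) (alt_simplex t j)))
       = word_simplex ((s, t), shuffle_word (i + j) A)"
proof -
  have "finite A"
    using assms(1) by (auto intro: finite_subset)
  with assms have "card ({0..<i + j} - A) = i"
    by (simp add: card_Diff_subset)
  with assms have "degs 0 A (alt_simplex s i) = map perm_of_bool (scan bxor s (map (\<lambda>k. k \<notin> A) [0..<i + j]))"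
    "degs 0 ({0..<i + j} - A) (alt_simplex t j) = map perm_of_bool (scan bxor t (map (\<lambda>k. k \<in> A) [0..<i + j]))"
    by (auto simp: degs_alt_simplex add.commute intro!: arg_cong[where f = "scan bxor t"] map_cong)
  then have "map compE (zip (map (Pair (idp 2)) (degs 0 A (alt_simplex s i))) (degs 0 ({0..<i + j} - A) (alt_simplex t j)))
      = map block_perm (zip (scan bxor s (map (\<lambda>k. k \<notin> A) [0..<i + j])) (scan bxor t (map (\<lambda>k. k \<in> A) [0..<i + j])))"
    by (simp only: compE_Pair_id)
  also have "\<dots> = map block_perm
      (scan pxor (s, t) (zip (map (\<lambda>k. k \<notin> A) [0..<i + j]) (map (\<lambda>k. k \<in> A) [0..<i + j])))"
    by (subst zip_scan[where h = pxor]) (simp_all add: pxor_def)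
  also have "zip (map (\<lambda>k. k \<notin> A) [0..<i + j]) (map (\<lambda>k. k \<in> A) [0..<i + j]) = shuffle_word (i + j) A"
    by (rule nth_equalityI) (auto simp: shuffle_word_def)
  finally show ?thesis
    by (simp add: word_simplex_def)
qed

lemma EZ3_x0_alt_simplex:
  "lin (\<lambda>u. nrm (map compE u)) (EZ3 x0 (alt_simplex s i) (alt_simplex t j)) =
   word_simplex ` (\<Sum>A\<in>{A. A \<subseteq> {0..<i + j} \<and> card A = j}. {((s, t), shuffle_word (i + j) A)})"
proof -
  let ?S = "{A. A \<subseteq> {0..<i + j} \<and> card A = j}"
  let ?u = "\<lambda>A. zip (map (Pair (idp 2)) (degs 0 A (alt_simplex s i))) (degs 0 ({0..<i + j} - A) (alt_simplex t j))"
  have "finite ?S"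
    by (rule finite_subset[of _ "Pow {0..<i + j}"]) auto
  have "EZ3 x0 (alt_simplex s i) (alt_simplex t j) = EZ (map (Pair (idp 2)) (alt_simplex s i)) (alt_simplex t j)"
    by (simp add: EZ3_def EZ_x0_left[OF nondeg_alt_simplex])
  also have "\<dots> = (\<Sum>A\<in>?S. nrm (?u A))"
    using \<open>finite ?S\<close> by (simp add: EZ_def modsum_eq_sum degs_map)
  finally have "lin (\<lambda>u. nrm (map compE u)) (EZ3 x0 (alt_simplex s i) (alt_simplex t j))
      = (\<Sum>A\<in>?S. nrm (map compE (?u A)))"
    using \<open>finite ?S\<close> by (simp add: lin_sum lin_nrm_map)
  also have "\<dots> = (\<Sum>A\<in>?S. word_simplex ` {((s, t), shuffle_word (i + j) A)})"
    by (intro sum.cong refl) (simp add: EZ_summand_x0_alt_simplex nrm_word_simplex word_nrm_def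
        LZ_notin_ab_word[OF shuffle_word_in_ab_words])
  finally show ?thesis
    by (simp add: image_sum_sets[OF inj_word_simplex])
qed

lemma AW_diagonal_alt_simplex:
  "AW (zip (alt_simplex s n) (alt_simplex s n))
    = (\<Sum>i\<in>{0..n}. {(alt_simplex s i, alt_simplex (bxor s (odd i)) (n - i))})"
proof -
  let ?x = "alt_simplex s n"
  have "faces [i + 1..<n + 1] ?x = alt_simplex s i" "faces [0..<i] ?x = alt_simplex (bxor s (odd i)) (n - i)"
    if "i \<le> n" for i
    using that faces_upt[of "i + 1" "n + 1" ?x] faces_upt[of 0 i ?x]
    by (simp_all add: take_alt_simplex drop_alt_simplex)
  then show ?thesis
    by (simp add: AW_def modsum_eq_sum nrm2_def nondeg_alt_simplex)
qed

lemma Gmap_alt_simplex: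
  "Gmap (alt_simplex s n) = word_simplex ` (\<Sum>w\<in>ab_words n. {((s, bxor s (odd (count_A w))), w)})"
proof -
  let ?g = "\<lambda>i A. {((s, bxor s (odd i)), shuffle_word n A)}"
  let ?S = "\<lambda>i. {A. A \<subseteq> {0..<n} \<and> card A = n - i}"
  have "Gmap (alt_simplex s n)
      = (\<Sum>i\<in>{0..n}. lin (\<lambda>u. nrm (map compE u)) (EZ3 x0 (alt_simplex s i) (alt_simplex (bxor s (odd i)) (n - i))))"
    unfolding Gmap_def AW_diagonal_alt_simplex by (simp add: lin_sum)
  also have "\<dots> = (\<Sum>i\<in>{0..n}. word_simplex ` (\<Sum>A\<in>?S i. ?g i A))"
  proof (intro sum.cong refl)
    fix i assume "i \<in> {0..n}"
    then show "lin (\<lambda>u. nrm (map compE u)) (EZ3 x0 (alt_simplex s i) (alt_simplex (bxor s (odd i)) (n - i)))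
        = word_simplex ` (\<Sum>A\<in>?S i. ?g i A)"
      using EZ3_x0_alt_simplex[of s i "bxor s (odd i)" "n - i"] by simp
  qed
  also have "\<dots> = word_simplex ` (\<Sum>i\<in>{0..n}. \<Sum>A\<in>?S i. ?g i A)"
    by (simp add: image_sum_sets[OF inj_word_simplex])
  also have "(\<Sum>i\<in>{0..n}. \<Sum>A\<in>?S i. ?g i A) = (\<Sum>(i, A)\<in>Sigma {0..n} ?S. ?g i A)"
    by (rule sum.Sigma) auto
  also have "(\<Sum>(i, A)\<in>Sigma {0..n} ?S. ?g i A) = (\<Sum>A\<in>Pow {0..<n}. ?g (n - card A) A)"
  proof -
    have "bij_betw (\<lambda>A. (n - card A, A)) (Pow {0..<n}) (Sigma {0..n} ?S)"
      by (rule bij_betw_byWitness[where f' = snd]) (auto dest: card_mono[rotated])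
    from sum.reindex_bij_betw[OF this, of "\<lambda>(i, A). ?g i A", symmetric] show ?thesis
      by (simp only: comp_def prod.case)
  qed
  also have "\<dots> = (\<Sum>w\<in>ab_words n. {((s, bxor s (odd (count_A w))), w)})"
    unfolding sum_ab_words_shuffle_word by (intro sum.cong) (simp_all add: count_A_shuffle_word)
  finally show ?thesis .
qed

section \<open>The Shih homotopy on alternating simplices\<close>

lemma scan_alternating_append:
  "scan bxor s (replicate a True) @ scan bxor t ds = scan bxor s (replicate a True @ bxor (bxor s (odd a)) t # ds)"
proof (induction a arbitrary: s)
  case 0
  have "bxor s (bxor s t) = t"
    by (auto simp: bxor_def)
  then show ?case by simp
next
  case (Suc a)
  have "bxor (\<not> s) (odd a) = bxor s (odd (Suc a))"
    by (simp add: bxor_def)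
  with Suc.IH[of "\<not> s"] show ?case by simp
qed

text \<open>The summand \<open>(p, q, V)\<close> of the Shih homotopy on an n-simplex, written with
  \<open>n = m + q + p + 1\<close> so that no truncated subtraction occurs.\<close>

lemma shih_summand_first:
  assumes "V \<subseteq> {0..p + q}" "card V = p"
  shows "degs (Suc m) V (sdeg m (faces [Suc m + q + 1..<Suc m + q + p + 1] (alt_simplex s (Suc m + q + p))))
       = map perm_of_bool (scan bxor s ((replicate m True @ [False]) @ map (\<lambda>i. i \<notin> V) [0..<Suc q + p]))"
proof -
  have "faces [Suc m + q + 1..<Suc m + q + p + 1] (alt_simplex s (Suc m + q + p)) = alt_simplex s (Suc m + q)"
    using faces_upt[of "Suc m + q + 1" "Suc m + q + p + 1" "alt_simplex s (Suc m + q + p)"]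
    by (simp add: take_alt_simplex)
  moreover have "sdeg m (scan bxor s (replicate (Suc m + q) True))
      = scan bxor s ((replicate m True @ [False]) @ replicate (Suc q) True)"
    by (simp add: bool_xor.sdeg_scan replicate_add[symmetric] del: replicate_Suc)
  moreover have "degs (Suc m) V (scan bxor s ((replicate m True @ [False]) @ replicate (Suc q) True))
      = scan bxor s ((replicate m True @ [False]) @ map (\<lambda>i. i \<notin> V) [0..<Suc q + p])"
  proof -
    have "finite V" "V \<subseteq> {0..<Suc q + card V}"
      using assms by (auto intro: finite_subset)
    from bool_xor.degs_scan[OF this, of "replicate m True @ [False]" "Suc m" s True]
    show ?thesis
      using assms(2) by simp
  qed
  ultimately show ?thesis
    by (simp add: alt_simplex_def sdeg_map degs_map del: replicate_Suc)
qed

lemma shih_summand_second: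
  assumes "W \<subseteq> {0..p + q}" "card W = Suc q"
  shows "degs (Suc m) W (faces [Suc m..<Suc m + q] (alt_simplex s (Suc m + q + p)))
       = map perm_of_bool (scan bxor s ((replicate m True @ [even q]) @ map (\<lambda>i. i \<notin> W) [0..<p + Suc q]))"
proof -
  let ?x = "alt_simplex s (Suc m + q + p)"
  have "faces [Suc m..<Suc m + q] ?x = take (Suc m) ?x @ drop (Suc m + q) ?x"
    by (rule faces_upt) simp_all
  also have "\<dots> = alt_simplex s m @ alt_simplex (bxor s (odd (Suc m + q))) p"
    using take_alt_simplex[of m "Suc m + q + p" s] drop_alt_simplex[of "Suc m + q" "Suc m + q + p" s]
    by simp
  also have "\<dots> = map perm_of_bool (scan bxor s (replicate m True) @ scan bxor (bxor s (odd (Suc m + q))) (replicate p True))"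
    by (simp add: alt_simplex_def)
  also have "\<dots> = map perm_of_bool (scan bxor s ((replicate m True @ [even q]) @ replicate p True))"
  proof -
    have "bxor (bxor s (odd m)) (bxor s (odd (Suc m + q))) = even q"
      by (auto simp: bxor_def)
    then show ?thesis
      by (simp only: scan_alternating_append append_assoc append_Cons append_Nil)
  qed
  finally have faces: "faces [Suc m..<Suc m + q] ?x
      = map perm_of_bool (scan bxor s ((replicate m True @ [even q]) @ replicate p True))" .
  have "finite W" "W \<subseteq> {0..<p + card W}"
    using assms by (auto intro: finite_subset)
  from bool_xor.degs_scan[OF this, of "replicate m True @ [even q]" "Suc m" s True] show ?thesis
    using assms(2) unfolding faces by (simp add: degs_map)
qed

lemma shih_summand_alt_simplex:
  assumes "V \<subseteq> {0..p + q}" "card V = p"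
  shows "zip (degs (Suc m) V (sdeg m (faces [Suc m + q + 1..<Suc m + q + p + 1] (alt_simplex s (Suc m + q + p)))))
             (degs (Suc m) ({0..p + q} - V) (faces [Suc m..<Suc m + q] (alt_simplex s (Suc m + q + p))))
       = map (\<lambda>(a, b). (perm_of_bool a, perm_of_bool b))
           (scan pxor (s, s) (replicate m LC @ (False, even q) # shuffle_word (p + q + 1) V))"
proof -
  let ?W = "{0..p + q} - V"
  let ?X = "(replicate m True @ [False]) @ map (\<lambda>i. i \<notin> V) [0..<Suc q + p]"
  let ?Y = "(replicate m True @ [even q]) @ map (\<lambda>i. i \<notin> ?W) [0..<p + Suc q]"
  have W: "?W \<subseteq> {0..p + q}" "card ?W = Suc q"
    using assms by (auto simp: card_Diff_subset finite_subset)
  have "zip (degs (Suc m) V (sdeg m (faces [Suc m + q + 1..<Suc m + q + p + 1] (alt_simplex s (Suc m + q + p)))))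
             (degs (Suc m) ?W (faces [Suc m..<Suc m + q] (alt_simplex s (Suc m + q + p))))
      = map (\<lambda>(a, b). (perm_of_bool a, perm_of_bool b)) (zip (scan bxor s ?X) (scan bxor s ?Y))"
    unfolding shih_summand_first[OF assms] shih_summand_second[OF W] zip_map_map ..
  also have "zip (scan bxor s ?X) (scan bxor s ?Y) = scan pxor (s, s) (zip ?X ?Y)"
    by (rule zip_scan) (simp_all add: pxor_def)
  also have "zip ?X ?Y = replicate m LC @ (False, even q) # shuffle_word (p + q + 1) V"
  proof -
    have "Suc q + p = p + q + 1" "p + Suc q = p + q + 1"
      by simp_all
    then have "zip (map (\<lambda>i. i \<notin> V) [0..<Suc q + p]) (map (\<lambda>i. i \<notin> ?W) [0..<p + Suc q])
        = shuffle_word (p + q + 1) V"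
      using assms(1) by (simp only:) (intro nth_equalityI; auto simp: shuffle_word_def simp del: upt_Suc)
    then show ?thesis
      by (simp add: zip_replicate)
  qed
  finally show ?thesis .
qed

definition shih_index :: "nat \<Rightarrow> (nat \<times> nat \<times> nat set) set" where
  "shih_index n = {(p, q, V). p < n \<and> q < n - p \<and> V \<subseteq> {0..p + q} \<and> card V = p}"

definition shih_summand_word :: "nat \<Rightarrow> nat \<times> nat \<times> nat set \<Rightarrow> letter list" where
  "shih_summand_word n t = (case t of (p, q, V) \<Rightarrow>
     replicate (n - p - q - 1) LC @ (False, even q) # shuffle_word (p + q + 1) V)"

lemma finite_shih_index: "finite (shih_index n)"
  by (rule finite_subset[of _ "{..<n} \<times> {..<n} \<times> Pow {0..n}"]) (auto simp: shih_index_def)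

lemma SHI_diagonal_alt_simplex:
  "SHI (zip (alt_simplex s n) (alt_simplex s n)) = (\<Sum>t\<in>shih_index n.
     nrm (map (\<lambda>(a, b). (perm_of_bool a, perm_of_bool b)) (scan pxor (s, s) (shih_summand_word n t))))"
proof (cases "n = 0")
  case True
  then have "shih_index n = {}"
    by (simp add: shih_index_def)
  with True show ?thesis
    by (simp add: SHI_def)
next
  case False
  let ?x = "alt_simplex s n"
  have "SHI (zip ?x ?x) = (\<Sum>(p, q, V)\<in>shih_index n. let m = n - p - q in
        nrm (zip (degs m V (sdeg (m - 1) (faces [n - p + 1..<n + 1] ?x)))
                 (degs m ({0..p + q} - V) (faces [n - p - q..<n - p] ?x))))"
    using False finite_shih_index by (simp add: SHI_def shih_index_def modsum_eq_sum)
  also have "\<dots> = (\<Sum>t\<in>shih_index n.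
      nrm (map (\<lambda>(a, b). (perm_of_bool a, perm_of_bool b)) (scan pxor (s, s) (shih_summand_word n t))))"
  proof (intro sum.cong refl)
    fix t assume "t \<in> shih_index n"
    then obtain p q V where t: "t = (p, q, V)" "p < n" "q < n - p" "V \<subseteq> {0..p + q}" "card V = p"
      by (auto simp: shih_index_def)
    define m where "m = n - p - q - 1"
    with t have n: "n = Suc m + q + p"
      by simp
    then have "n - p - q = Suc m" "n - p + 1 = Suc m + q + 1" "n + 1 = Suc m + q + p + 1" "n - p = Suc m + q"
      by simp_all
    with t n show "(\<lambda>(p, q, V). let m = n - p - q in
        nrm (zip (degs m V (sdeg (m - 1) (faces [n - p + 1..<n + 1] ?x)))
                 (degs m ({0..p + q} - V) (faces [n - p - q..<n - p] ?x)))) t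
      = nrm (map (\<lambda>(a, b). (perm_of_bool a, perm_of_bool b)) (scan pxor (s, s) (shih_summand_word n t)))"
      by (simp only: Let_def prod.case diff_Suc_1 shih_summand_alt_simplex shih_summand_word_def)
  qed
  finally show ?thesis .
qed

lemma H2_alt_simplex_summands:
  "H2 (alt_simplex s n) = word_simplex ` (\<Sum>t\<in>shih_index n. word_nrm ((s, s), shih_summand_word n t))"
proof -
  have "(\<lambda>(a, b). compE ((idp 2, a), b)) \<circ> (\<lambda>(a, b). (perm_of_bool a, perm_of_bool b)) = block_perm"
    by (auto simp: block_perm_def)
  then have "H2 (alt_simplex s n)
      = (\<Sum>t\<in>shih_index n. nrm (word_simplex ((s, s), shih_summand_word n t)))"
    unfolding H2_def SHI_diagonal_alt_simplex using finite_shih_index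
    by (simp add: lin_sum lin_nrm_map word_simplex_def)
  then show ?thesis
    by (simp add: nrm_word_simplex image_sum_sets[OF inj_word_simplex])
qed

definition shih_word :: "nat \<Rightarrow> letter list \<Rightarrow> letter list" where
  "shih_word k w = replicate k LC @ LB # w"

definition shih_chain :: "nat \<Rightarrow> letter \<Rightarrow> (letter \<times> letter list) set" where
  "shih_chain n st = (\<Sum>k<n. \<Sum>w\<in>odd_words (n - k). {(st, shih_word k w)})"

lemma finite_shih_chain: "finite (shih_chain n st)"
  unfolding shih_chain_def by (intro finite_sum_sets) auto

lemma word_nrm_shih_prefix:
  "w \<in> ab_words N \<Longrightarrow>
   word_nrm (st, replicate k LC @ (False, e) # w) = (if e then {(st, shih_word k w)} else {})"
  by (auto simp: word_nrm_def shih_word_def dest: LZ_notin_ab_word)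

lemma sum_shih_summands_fixed_prefix:
  assumes "0 < N"
  shows "(\<Sum>V | V \<subseteq> {0..<N} \<and> card V < N.
            word_nrm (st, replicate k LC @ (False, even (N - 1 - card V)) # shuffle_word N V))
       = (\<Sum>w\<in>odd_words N. {(st, shih_word k w)})"
proof -
  let ?g = "\<lambda>w. if odd (count_A w) then {(st, shih_word k w)} else {}"
  have "(\<Sum>V | V \<subseteq> {0..<N} \<and> card V < N.
            word_nrm (st, replicate k LC @ (False, even (N - 1 - card V)) # shuffle_word N V))
      = (\<Sum>V\<in>Pow {0..<N}. ?g (shuffle_word N V))"
  proof (rule sum.mono_neutral_cong_left)
    show "\<forall>V\<in>Pow {0..<N} - {V. V \<subseteq> {0..<N} \<and> card V < N}. ?g (shuffle_word N V) = 0"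
    proof
      fix V assume "V \<in> Pow {0..<N} - {V. V \<subseteq> {0..<N} \<and> card V < N}"
      then have "V \<subseteq> {0..<N}" "card V = N"
        using card_mono[of "{0..<N}" V] by auto
      then show "?g (shuffle_word N V) = 0"
        by (simp add: count_A_shuffle_word)
    qed
    show "word_nrm (st, replicate k LC @ (False, even (N - 1 - card V)) # shuffle_word N V)
        = ?g (shuffle_word N V)" if "V \<in> {V. V \<subseteq> {0..<N} \<and> card V < N}" for V
    proof -
      from that have "even (N - 1 - card V) = odd (count_A (shuffle_word N V))"
        by (simp add: count_A_shuffle_word)
      then show ?thesis
        by (subst word_nrm_shih_prefix[OF shuffle_word_in_ab_words]) simp
    qed
  qed auto
  also have "\<dots> = (\<Sum>w\<in>ab_words N. ?g w)"
    by (simp add: sum_ab_words_shuffle_word)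
  also have "\<dots> = (\<Sum>w\<in>odd_words N. {(st, shih_word k w)})"
    unfolding odd_words_def sum.inter_filter[OF finite_ab_words] zero_set_eq_empty ..
  finally show ?thesis .
qed

lemma bij_betw_shih_index:
  "bij_betw (\<lambda>(k, V). (card V, n - k - 1 - card V, V))
     (SIGMA k:{..<n}. {V. V \<subseteq> {0..<n - k} \<and> card V < n - k}) (shih_index n)"
proof (rule bij_betw_byWitness[where f' = "\<lambda>(p, q, V). (n - p - q - 1, V)"])
  show "(\<lambda>(k, V). (card V, n - k - 1 - card V, V)) `
      (SIGMA k:{..<n}. {V. V \<subseteq> {0..<n - k} \<and> card V < n - k}) \<subseteq> shih_index n"
  proof
    fix t assume "t \<in> (\<lambda>(k, V). (card V, n - k - 1 - card V, V)) `
      (SIGMA k:{..<n}. {V. V \<subseteq> {0..<n - k} \<and> card V < n - k})"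
    then obtain k V where "t = (card V, n - k - 1 - card V, V)" "k < n" "V \<subseteq> {0..<n - k}" "card V < n - k"
      by auto
    moreover from this have "{0..card V + (n - k - 1 - card V)} = {0..<n - k}"
      by auto
    ultimately show "t \<in> shih_index n"
      by (auto simp: shih_index_def)
  qed
  show "(\<lambda>(p, q, V). (n - p - q - 1, V)) ` shih_index n
      \<subseteq> (SIGMA k:{..<n}. {V. V \<subseteq> {0..<n - k} \<and> card V < n - k})"
  proof
    fix t assume "t \<in> (\<lambda>(p, q, V). (n - p - q - 1, V)) ` shih_index n"
    then obtain p q V where "t = (n - p - q - 1, V)" "p < n" "q < n - p" "V \<subseteq> {0..p + q}" "card V = p"
      by (auto simp: shih_index_def)
    moreover from this have "{0..p + q} = {0..<n - (n - p - q - 1)}"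
      by auto
    ultimately show "t \<in> (SIGMA k:{..<n}. {V. V \<subseteq> {0..<n - k} \<and> card V < n - k})"
      by auto
  qed
qed (auto simp: shih_index_def)

lemma sum_shih_summands: "(\<Sum>t\<in>shih_index n. word_nrm (st, shih_summand_word n t)) = shih_chain n st"
proof -
  let ?Vs = "\<lambda>k. {V. V \<subseteq> {0..<n - k} \<and> card V < n - k}"
  have "(\<Sum>t\<in>shih_index n. word_nrm (st, shih_summand_word n t))
      = (\<Sum>(k, V)\<in>Sigma {..<n} ?Vs. word_nrm (st, shih_summand_word n (card V, n - k - 1 - card V, V)))"
    using bij_betw_shih_index[of n] by (simp add: sum.reindex_bij_betw[symmetric] case_prod_beta)
  also have "\<dots> = (\<Sum>k<n. \<Sum>V\<in>?Vs k.
      word_nrm (st, replicate k LC @ (False, even (n - k - 1 - card V)) # shuffle_word (n - k) V))"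
    by (subst sum.Sigma[symmetric]) (auto intro!: sum.cong simp: shih_summand_word_def Suc_diff_Suc)
  also have "\<dots> = shih_chain n st"
    unfolding shih_chain_def
    by (intro sum.cong refl) (rule sum_shih_summands_fixed_prefix; simp)
  finally show ?thesis .
qed

lemma H2_alt_simplex: "H2 (alt_simplex s n) = word_simplex ` shih_chain n (s, s)"
  by (simp add: H2_alt_simplex_summands sum_shih_summands)

lemma merge_at_replicate_LC:
  "Suc i < k \<Longrightarrow> LZ \<in> set (merge_at i (replicate k LC @ w))"
  by (auto simp: merge_at_def nth_append pxor_def bxor_def)

lemma word_bd_shih_word_prefix:
  assumes "LZ \<notin> set w"
  shows "(\<Sum>j<Suc k. word_nrm (word_face j (st, shih_word k w))) =
     (if k = 0 then {(pxor st LB, w)} else {(pxor st LC, shih_word (k - 1) w)})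
   + (if k = 0 then {} else {(st, replicate (k - 1) LC @ LA # w)})"
proof (cases k)
  case 0
  with assms show ?thesis
    by (simp add: word_face_def shih_word_def word_nrm_def)
next
  case (Suc k')
  let ?f = "\<lambda>j. word_nrm (word_face j (st, shih_word k w))"
  have "?f 0 = {(pxor st LC, shih_word k' w)}"
    using assms Suc by (simp add: word_face_def shih_word_def word_nrm_def)
  moreover have "?f (Suc i) = {}" if "i < k'" for i
    using that Suc merge_at_replicate_LC[of i k "LB # w"]
    by (simp add: word_face_def word_nrm_def shih_word_def)
  moreover have "?f (Suc k') = {(st, replicate k' LC @ LA # w)}"
  proof -
    have "merge_at k' (shih_word k w) = replicate k' LC @ LA # w"
      using Suc by (simp add: merge_at_def shih_word_def nth_append pxor_def replicate_append_same[symmetric])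
    with assms Suc show ?thesis
      by (simp add: word_face_def word_nrm_def shih_word_def)
  qed
  ultimately show ?thesis
    using Suc sum_lessThan_Suc_Suc[of ?f k'] by simp
qed

lemma word_bd_shih_word_suffix:
  assumes "w \<in> ab_words (Suc m)"
  shows "(\<Sum>j<Suc (Suc m). word_nrm (word_face (Suc k + j) (st, shih_word k w))) =
     (if hd w = LA then {(st, replicate (Suc k) LC @ tl w)} else {})
   + (\<Sum>i<m. word_nrm (st, shih_word k (merge_at i w)))
   + {(st, shih_word k (butlast w))}"
proof -
  let ?f = "\<lambda>j. word_nrm (word_face (Suc k + j) (st, shih_word k w))"
  obtain a w' where w: "w = a # w'" "a \<in> {LA, LB}" "length w' = m" "LZ \<notin> set w"
    using assms by (cases w) (auto simp: ab_words_def)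
  have "?f 0 = (if hd w = LA then {(st, replicate (Suc k) LC @ tl w)} else {})"
  proof -
    have "merge_at k (shih_word k w) = replicate k LC @ pxor LB a # w'"
      using w by (simp add: merge_at_def shih_word_def nth_append)
    with w show ?thesis
      by (auto simp: word_face_def word_nrm_def shih_word_def pxor_def replicate_append_same[symmetric])
  qed
  moreover have "?f (Suc i) = word_nrm (st, shih_word k (merge_at i w))" if "i < m" for i
  proof -
    have "merge_at (Suc k + i) (shih_word k w) = shih_word k (merge_at i w)"
      using that w by (simp add: merge_at_def shih_word_def nth_append eval_nat_numeral)
    with that w show ?thesis
      by (simp add: word_face_def shih_word_def)
  qed
  moreover have "?f (Suc m) = {(st, shih_word k (butlast w))}"
  proof -
    have "butlast (shih_word k w) = shih_word k (butlast w)"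
      using w by (simp add: shih_word_def butlast_append)
    moreover have "LZ \<notin> set (shih_word k (butlast w))"
      using w by (auto simp: shih_word_def dest: in_set_butlastD)
    ultimately show ?thesis
      using w by (simp add: word_face_def word_nrm_def shih_word_def)
  qed
  ultimately show ?thesis
    using sum_lessThan_Suc_Suc[of ?f m] by (simp add: add.assoc)
qed

lemma word_bd_shih_word:
  assumes "w \<in> ab_words (Suc m)"
  shows "word_bd (st, shih_word k w) =
     (if k = 0 then {(pxor st LB, w)} else {(pxor st LC, shih_word (k - 1) w)})
   + (if k = 0 then {} else {(st, replicate (k - 1) LC @ LA # w)})
   + (if hd w = LA then {(st, replicate (Suc k) LC @ tl w)} else {})
   + (\<Sum>i<m. word_nrm (st, shih_word k (merge_at i w)))
   + {(st, shih_word k (butlast w))}"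
proof -
  have "length w = Suc m"
    using assms by (simp add: ab_words_def)
  then have "word_bd (st, shih_word k w)
      = (\<Sum>j<Suc k + Suc (Suc m). word_nrm (word_face j (st, shih_word k w)))"
    by (simp add: word_bd_def shih_word_def)
  then show ?thesis
    using assms
    by (simp only: sum_lessThan_add word_bd_shih_word_prefix[OF LZ_notin_ab_word[OF assms]]
        word_bd_shih_word_suffix add.assoc)
qed

definition swap_at :: "nat \<Rightarrow> letter list \<Rightarrow> letter list" where
  "swap_at i w = take i w @ w ! Suc i # w ! i # drop (Suc (Suc i)) w"

lemma split_at_pair: "Suc i < length w \<Longrightarrow> w = take i w @ w ! i # w ! Suc i # drop (Suc (Suc i)) w"
  by (metis Cons_nth_drop_Suc Suc_lessD append_take_drop_id)

lemma
  assumes "Suc i < length w"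
  shows length_swap_at: "length (swap_at i w) = length w"
    and set_swap_at: "set (swap_at i w) = set w"
    and count_A_swap_at: "count_A (swap_at i w) = count_A w"
    and nth_swap_at: "swap_at i w ! i = w ! Suc i" "swap_at i w ! Suc i = w ! i"
    and swap_at_swap_at: "swap_at i (swap_at i w) = w"
    and merge_at_swap_at: "merge_at i (swap_at i w) = merge_at i w"
proof -
  let ?u = "take i w" and ?v = "drop (Suc (Suc i)) w" and ?a = "w ! i" and ?b = "w ! Suc i"
  have w: "w = ?u @ ?a # ?b # ?v" and u: "length ?u = i"
    using assms split_at_pair by auto
  show "length (swap_at i w) = length w"
    using assms by (simp add: swap_at_def)
  show "set (swap_at i w) = set w"
    by (subst (2) w) (auto simp: swap_at_def)
  show "count_A (swap_at i w) = count_A w"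
    by (subst (2) w) (simp add: swap_at_def count_A_def)
  show nth: "swap_at i w ! i = ?b" "swap_at i w ! Suc i = ?a"
    using u by (simp_all add: swap_at_def nth_append)
  have take: "take i (swap_at i w) = ?u" and drop: "drop (Suc (Suc i)) (swap_at i w) = ?v"
    using u by (simp_all add: swap_at_def)
  have "swap_at i (swap_at i w) = ?u @ ?a # ?b # ?v"
    unfolding swap_at_def[of i "swap_at i w"] take drop nth ..
  then show "swap_at i (swap_at i w) = w"
    using w by simp
  show "merge_at i (swap_at i w) = merge_at i w"
    unfolding merge_at_def take drop nth by (auto simp: pxor_def bxor_def)
qed

lemma sum_sets_involution_vanishes:
  assumes "finite S"
    and "\<And>x. x \<in> S \<Longrightarrow> \<sigma> x \<in> S \<and> \<sigma> (\<sigma> x) = x \<and> f (\<sigma> x) = f x"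
    and "\<And>x. x \<in> S \<Longrightarrow> \<sigma> x = x \<Longrightarrow> f x = {}"
  shows "sum f S = ({} :: 'a set)"
proof -
  let ?F = "{x \<in> S. \<sigma> x = x}"
  have "sum f S = sum f (S - ?F) + sum f ?F"
    using assms(1) by (intro sum.subset_diff) auto
  also have "sum f ?F = {}"
    using assms(3) by (intro sum.neutral[where 'a = "'a set", unfolded zero_set_eq_empty]) auto
  also have "sum f (S - ?F) = 0"
  proof (rule sum_involution_eq_0[where h = \<sigma>])
    fix x assume "x \<in> S - ?F"
    then show "f (\<sigma> x) + f x = 0"
      using assms(2) by simp
  next
    fix x assume "x \<in> S - ?F"
    then show "\<sigma> x \<in> S - ?F"
      using assms(2)[of x] by auto
  next
    fix x assume "x \<in> S - ?F"
    then show "\<sigma> (\<sigma> x) = x"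
      using assms(2) by simp
  next
    fix x assume "x \<in> S - ?F"
    then show "\<sigma> x \<noteq> x"
      by simp
  qed
  finally show ?thesis
    by simp
qed

lemma swap_at_in_odd_words: "w \<in> odd_words L \<Longrightarrow> Suc i < L \<Longrightarrow> swap_at i w \<in> odd_words L"
  by (simp add: odd_words_def ab_words_def set_swap_at length_swap_at count_A_swap_at)

lemma sum_merges_odd_words:
  assumes "\<And>u. LZ \<in> set u \<Longrightarrow> h u = {}"
  shows "(\<Sum>w\<in>odd_words L. \<Sum>i<L - 1. h (merge_at i w)) = {}"
proof -
  let ?S = "Sigma (odd_words L) (\<lambda>_. {..<L - 1})"
  let ?\<sigma> = "\<lambda>(w, i). (swap_at i w, i)"
  let ?f = "\<lambda>(w, i). h (merge_at i w)"
  have S: "p \<in> ?S \<Longrightarrow> \<exists>w i. p = (w, i) \<and> w \<in> odd_words L \<and> Suc i < L \<and> length w = L" for p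
    by (auto simp: odd_words_def ab_words_def)
  have "(\<Sum>w\<in>odd_words L. \<Sum>i<L - 1. h (merge_at i w)) = sum ?f ?S"
    by (rule sum.Sigma) auto
  also have "\<dots> = {}"
  proof (rule sum_sets_involution_vanishes[where \<sigma> = ?\<sigma>])
    fix p assume "p \<in> ?S"
    with S obtain w i where "p = (w, i)" "w \<in> odd_words L" "Suc i < L" "length w = L"
      by blast
    then show "?\<sigma> p \<in> ?S \<and> ?\<sigma> (?\<sigma> p) = p \<and> ?f (?\<sigma> p) = ?f p"
      by (simp add: swap_at_in_odd_words swap_at_swap_at merge_at_swap_at)
  next
    fix p assume "p \<in> ?S" "?\<sigma> p = p"
    with S obtain w i where "p = (w, i)" "Suc i < length w" "swap_at i w = w"
      by fastforce
    then have "w ! i = w ! Suc i"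
      by (metis nth_swap_at(1))
    with \<open>Suc i < length w\<close> have "LZ \<in> set (merge_at i w)"
      by (simp add: merge_at_def pxor_def bxor_def)
    with \<open>p = (w, i)\<close> assms show "?f p = {}"
      by simp
  qed simp
  finally show ?thesis .
qed

section \<open>The homotopy formula in word coordinates\<close>

lemma sum_first_faces:
  "(\<Sum>k<Suc n. \<Sum>w\<in>odd_words (Suc (n - k)).
      if k = 0 then {(pxor st LB, w)} else {(pxor st LC, shih_word (k - 1) w)})
   = (\<Sum>w\<in>odd_words (Suc n). {(pxor st LB, w)}) + shih_chain n (pxor st LC)"
  unfolding sum.lessThan_Suc_shift shih_chain_def
  by (simp add: Suc_diff_Suc del: sum.lessThan_Suc)

lemma sum_prefix_merge_faces:
  "(\<Sum>k<Suc n. \<Sum>w\<in>odd_words (Suc (n - k)).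
      if k = 0 then {} else {(st, replicate (k - 1) LC @ LA # w)})
   = (\<Sum>k<n. \<Sum>v\<in>odd_words (n - k). {(st, replicate k LC @ LA # v)})"
  unfolding sum.lessThan_Suc_shift
  by (simp add: Suc_diff_Suc del: sum.lessThan_Suc)

lemma sum_middle_faces:
  "(\<Sum>k<Suc n. \<Sum>w\<in>odd_words (Suc (n - k)).
      if hd w = LA then {(st, replicate (Suc k) LC @ tl w)} else {})
   = (\<Sum>k<n. \<Sum>v\<in>even_words (n - Suc k). {(st, shih_word (Suc k) v)})
   + (\<Sum>k<n. \<Sum>v\<in>odd_words (n - Suc k). {(st, replicate (Suc k) LC @ LA # v)})
   + {(st, replicate (Suc n) LC)}"
proof -
  have "(\<Sum>k<Suc n. \<Sum>w\<in>odd_words (Suc (n - k)).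
      if hd w = LA then {(st, replicate (Suc k) LC @ tl w)} else {})
      = (\<Sum>k<Suc n. \<Sum>u\<in>even_words (n - k). {(st, replicate (Suc k) LC @ u)})"
    by (simp add: sum_odd_words_Suc)
  also have "\<dots> = (\<Sum>k<n. \<Sum>u\<in>even_words (n - k). {(st, replicate (Suc k) LC @ u)})
      + {(st, replicate (Suc n) LC)}"
    by simp
  also have "(\<Sum>k<n. \<Sum>u\<in>even_words (n - k). {(st, replicate (Suc k) LC @ u)})
      = (\<Sum>k<n. (\<Sum>v\<in>even_words (n - Suc k). {(st, shih_word (Suc k) v)})
          + (\<Sum>v\<in>odd_words (n - Suc k). {(st, replicate (Suc k) LC @ LA # v)}))"
  proof (intro sum.cong refl)
    fix k assume "k \<in> {..<n}"
    then have "n - k = Suc (n - Suc k)"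
      by simp
    then show "(\<Sum>u\<in>even_words (n - k). {(st, replicate (Suc k) LC @ u)})
      = (\<Sum>v\<in>even_words (n - Suc k). {(st, shih_word (Suc k) v)})
          + (\<Sum>v\<in>odd_words (n - Suc k). {(st, replicate (Suc k) LC @ LA # v)})"
      by (simp only: sum_even_words_Suc shih_word_def)
  qed
  finally show ?thesis
    by (simp add: sum.distrib)
qed

lemma sum_inner_merge_faces:
  "(\<Sum>k<Suc n. \<Sum>w\<in>odd_words (Suc (n - k)). \<Sum>i<n - k. word_nrm (st, shih_word k (merge_at i w))) = {}"
proof -
  have "(\<Sum>w\<in>odd_words (Suc (n - k)). \<Sum>i<Suc (n - k) - 1. word_nrm (st, shih_word k (merge_at i w))) = {}"
    for k
    by (rule sum_merges_odd_words) (simp add: word_nrm_def shih_word_def)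
  then show ?thesis
    by simp
qed

lemma sum_last_faces:
  "(\<Sum>k<Suc n. \<Sum>w\<in>odd_words (Suc (n - k)). {(st, shih_word k (butlast w))})
   = shih_chain n st + (\<Sum>k<Suc n. \<Sum>v\<in>even_words (n - k). {(st, shih_word k v)})"
  by (simp add: sum_odd_words_Suc_snoc sum.distrib shih_chain_def)

lemma sum_ab_words_parity:
  "(\<Sum>w\<in>ab_words n. {((s, bxor s (odd (count_A w))), w)})
   = (\<Sum>w\<in>odd_words n. {(pxor (s, s) LB, w)}) + (\<Sum>w\<in>even_words n. {((s, s), w)})"
proof -
  have "(\<Sum>w\<in>ab_words n. {((s, bxor s (odd (count_A w))), w)})
      = (\<Sum>w\<in>odd_words n. {((s, bxor s (odd (count_A w))), w)})
      + (\<Sum>w\<in>even_words n. {((s, bxor s (odd (count_A w))), w)})"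
    unfolding ab_words_eq_odd_Un_even
    by (rule sum.union_disjoint) (auto simp: odd_words_def even_words_def)
  then show ?thesis
    by (simp add: odd_words_def even_words_def pxor_def)
qed

lemma lin_word_bd_shih_chain:
  "lin word_bd (shih_chain (Suc n) st)
   = (\<Sum>k<Suc n. \<Sum>w\<in>odd_words (Suc (n - k)). word_bd (st, shih_word k w))"
proof -
  have "lin word_bd (shih_chain (Suc n) st)
      = (\<Sum>k<Suc n. \<Sum>w\<in>odd_words (Suc n - k). word_bd (st, shih_word k w))"
    unfolding shih_chain_def by (simp add: lin_sum finite_sum_sets del: sum.lessThan_Suc)
  then show ?thesis
    by (simp add: Suc_diff_le del: sum.lessThan_Suc)
qed

lemma shih_chain_homotopy:
  "lin word_bd (shih_chain (Suc n) (s, s)) + shih_chain n (pxor (s, s) LC) + shih_chain n (s, s)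
   = {((s, s), replicate (Suc n) LC)} + (\<Sum>w\<in>ab_words (Suc n). {((s, bxor s (odd (count_A w))), w)})"
proof -
  let ?st = "(s, s)"
  define HB where "HB k = (\<Sum>v\<in>even_words (n - k). {(?st, shih_word k v)})" for k
  define HA where "HA k = (\<Sum>v\<in>odd_words (n - k). {(?st, replicate k LC @ LA # v)})" for k
  have "lin word_bd (shih_chain (Suc n) ?st)
      = ((\<Sum>w\<in>odd_words (Suc n). {(pxor ?st LB, w)}) + shih_chain n (pxor ?st LC))
      + (\<Sum>k<n. HA k) + ((\<Sum>k<n. HB (Suc k)) + (\<Sum>k<n. HA (Suc k)) + {(?st, replicate (Suc n) LC)})
      + {} + (shih_chain n ?st + (\<Sum>k<Suc n. HB k))"
  proof -
    have "lin word_bd (shih_chain (Suc n) ?st) = (\<Sum>k<Suc n. \<Sum>w\<in>odd_words (Suc (n - k)).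
          (if k = 0 then {(pxor ?st LB, w)} else {(pxor ?st LC, shih_word (k - 1) w)})
        + (if k = 0 then {} else {(?st, replicate (k - 1) LC @ LA # w)})
        + (if hd w = LA then {(?st, replicate (Suc k) LC @ tl w)} else {})
        + (\<Sum>i<n - k. word_nrm (?st, shih_word k (merge_at i w)))
        + {(?st, shih_word k (butlast w))})"
      unfolding lin_word_bd_shih_chain
      by (intro sum.cong refl word_bd_shih_word) (simp add: odd_words_def)
    then show ?thesis
      unfolding HA_def HB_def
      by (simp only: sum.distrib sum_first_faces sum_prefix_merge_faces sum_middle_faces
          sum_inner_merge_faces sum_last_faces)
  qed
  moreover have "(\<Sum>k<Suc n. HB k) = HB 0 + (\<Sum>k<n. HB (Suc k))"
    by (rule sum.lessThan_Suc_shift)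
  moreover have "(\<Sum>k<n. HA k) = HA 0 + (\<Sum>k<n. HA (Suc k))"
    using sum_sets_telescope[of HA n] by (simp add: HA_def)
  moreover have "(\<Sum>w\<in>even_words (Suc n). {(?st, w)}) = HB 0 + HA 0"
    by (simp add: HA_def HB_def sum_even_words_Suc shih_word_def)
  ultimately show ?thesis
    by (simp add: sum_ab_words_parity add_ac del: sum.lessThan_Suc)
qed

lemma homotopy_formula_alt_simplex:
  "lin bd (H2 (alt_simplex s n)) + lin H2 (bd (alt_simplex s n))
   = NEg (alt_simplex s n) + Gmap (alt_simplex s n)"
proof (cases n)
  case 0
  then show ?thesis
    by (simp add: H2_alt_simplex shih_chain_def bd_def NEg_alt_simplex Gmap_alt_simplex)
next
  case (Suc m)
  have "lin bd (H2 (alt_simplex s n)) + lin H2 (bd (alt_simplex s n))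
      = word_simplex ` (lin word_bd (shih_chain (Suc m) (s, s))
          + shih_chain m (pxor (s, s) LC) + shih_chain m (s, s))"
    using Suc finite_shih_chain
    by (simp add: H2_alt_simplex lin_bd_image_word_simplex bd_alt_simplex lin_plus
        image_plus_set[OF inj_word_simplex] pxor_def add.assoc)
  also have "\<dots> = NEg (alt_simplex s n) + Gmap (alt_simplex s n)"
    unfolding shih_chain_homotopy NEg_alt_simplex Gmap_alt_simplex Suc
    by (simp add: image_plus_set[OF inj_word_simplex])
  finally show ?thesis .
qed

theorem mainTheorem6:
  assumes "finite c" and "c \<subseteq> NE 2"
  shows "lin NEf c = lin Fmap c \<and>
         cadd (lin bd (lin H2 c)) (lin H2 (lin bd c)) = cadd (lin NEg c) (lin Gmap c)"
proof
  have alt: "\<exists>s n. x = alt_simplex s n" if "x \<in> c" for x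
    using that assms(2) NE_2_eq_alt_simplex by blast
  show "lin NEf c = lin Fmap c"
    unfolding lin_eq_sum[OF assms(1)] by (intro sum.cong refl) (auto dest!: alt simp: NEf_alt_simplex)
  have "finite (H2 x)" if "x \<in> c" for x
    using alt[OF that] finite_shih_chain by (auto simp: H2_alt_simplex)
  then have "cadd (lin bd (lin H2 c)) (lin H2 (lin bd c)) = (\<Sum>x\<in>c. lin bd (H2 x) + lin H2 (bd x))"
    using assms(1) by (simp add: cadd_eq_plus lin_lin finite_bd sum.distrib)
  also have "\<dots> = (\<Sum>x\<in>c. NEg x + Gmap x)"
    by (intro sum.cong refl) (auto dest!: alt simp: homotopy_formula_alt_simplex)
  also have "\<dots> = cadd (lin NEg c) (lin Gmap c)"
    using assms(1) by (simp add: cadd_eq_plus lin_eq_sum sum.distrib)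
  finally show "cadd (lin bd (lin H2 c)) (lin H2 (lin bd c)) = cadd (lin NEg c) (lin Gmap c)" .
qed

end
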